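(* Let $p\ge2$, and let $(V_i)_{i\ge1}$ and the determinants $\mathcal H^{p,m}_n$ be as in the context, with the convention $\mathcal H^{p,m}_{-1}=1$. For $m\in\{0,\ldots,p-1\}$ and $n\in\mathbb N$, \[ V_{pn+m} = \begin{cases} \dfrac{\mathcal H^{p,m}_n\, \mathcal H^{p,m-1}_{n-1}}{\mathcal H^{p,m}_{n-1}\, \mathcal H^{p,m-1}_{n}} & \text{if } m\ge1,\\[2ex] \dfrac{\mathcal H^{p,0}_n\, \mathcal H^{p,p-1}_{n-2}}{\mathcal H^{p,0}_{n-1}\, \mathcal H^{p,p-1}_{n-1}} & \text{if } m=0 \text{ and } n\ge1. \end{cases} \]
   Context: Fix an integer $p\ge 2$. A $p$-constellation is a planar map (proper embedding of a connected graph in the sphere, up to orientation-preserving homeomorphism) whose faces are colored black or white so that adjacent faces have opposite colors, every black face has degree $p$ and every white face has degree a multiple of $p$. Edges are oriented with the white face on their right. Rooted means one edge (root edge) is distinguished; pointed means a vertex (pointed vertex) is distinguished. In a pointed constellation a vertex has type $j$ if $j$ is the minimal length of an oriented path from it to the pointed vertex; an edge has type $j\to j'$ if its origin and endpoint have types $j,j'$. Let $(x_k)_{k\ge1}$ be formal variables, a white face of degree $kp$ having weight $x_k$, and a constellation weighted by the product of its white face weights. For $i\ge1$, $V_i$ is $1$ plus the generating function of pointed rooted $p$-constellations whose root edge is of type $j\to j-1$ for some $j\le i$. A $p$-path is a lattice path in $\mathbb Z\times\mathbb N$ with rises $(1,p-1)$ and falls $(1,-1)$; its weight is the product over its falls of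 $V_i$, $i$ being the starting height of the fall. For $n,r\ge0$, $F_n^{(r)}$ is the sum of the weights of all $p$-paths from $(-r,r)$ to $(np,0)$. For $k\in\mathbb N$ let $q_k=\lfloor k/(p-1)\rfloor$ and $r_k=k-(p-1)q_k$. For $m\in\{0,\ldots,p-1\}$ and $n\in\mathbb N$, $\mathcal H^{p,m}_n:=\det_{0\le i,j\le n}F^{(r_{i+m})}_{q_{i+m}+j}$. *)

theory Defs
  imports "HOL-Library.Poly_Mapping" "HOL-Library.Multiset"
    "HOL-Computational_Algebra.Formal_Power_Series"
    "Jordan_Normal_Form.Determinant"
begin

text \<open>Multivariate formal power series in x_1, x_2, ... with integer coefficients.
  A monomial is a finite multiset of positive integers (k occurring e times means x_k^e);
  a polynomial is a finitely supported map from monomials to integers.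
  A power series is encoded as a formal power series in an auxiliary grading variable t whose
  coefficient of t^n is the (finite) homogeneous part of weighted degree n (x_k has degree k),
  i.e. via the injective ring embedding x_k |-> t^k x_k.  For constellations, n is the number of
  black faces.\<close>

type_synonym gf = "((nat multiset \<Rightarrow>\<^sub>0 int)) fps"

text \<open>A labelled constellation with N edges: edges are 0..<N; \<beta> maps an edge to the next edge
  (in the direction of the edge orientation) around its black face, \<omega> likewise around its white
  face. Both faces are directed cycles since each edge has black face on its left and white face on
  its right. The origin (tail) of edge e is the vertex given by the orbit of e under \<omega> o \<beta>^-1
  (the rotation of outgoing edges around a vertex); the endpoint (head) of e is the tail of \<beta> e.\<close>

definition porbit :: "(nat \<Rightarrow> nat) \<Rightarrow> nat \<Rightarrow> nat set" where
  "porbit f e = {(f ^^ k) e | k. True}"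

definition vrot :: "(nat \<Rightarrow> nat) \<Rightarrow> (nat \<Rightarrow> nat) \<Rightarrow> nat \<Rightarrow> nat" where
  "vrot \<beta> \<omega> = \<omega> \<circ> inv_into UNIV \<beta>"

definition tailv :: "(nat \<Rightarrow> nat) \<Rightarrow> (nat \<Rightarrow> nat) \<Rightarrow> nat \<Rightarrow> nat set" where
  "tailv \<beta> \<omega> e = porbit (vrot \<beta> \<omega>) e"

definition headv :: "(nat \<Rightarrow> nat) \<Rightarrow> (nat \<Rightarrow> nat) \<Rightarrow> nat \<Rightarrow> nat set" where
  "headv \<beta> \<omega> e = tailv \<beta> \<omega> (\<beta> e)"

definition vertices :: "nat \<Rightarrow> (nat \<Rightarrow> nat) \<Rightarrow> (nat \<Rightarrow> nat) \<Rightarrow> nat set set" where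
  "vertices N \<beta> \<omega> = tailv \<beta> \<omega> ` {0..<N}"

definition black_faces :: "nat \<Rightarrow> (nat \<Rightarrow> nat) \<Rightarrow> nat set set" where
  "black_faces N \<beta> = porbit \<beta> ` {0..<N}"

definition white_faces :: "nat \<Rightarrow> (nat \<Rightarrow> nat) \<Rightarrow> nat set set" where
  "white_faces N \<omega> = porbit \<omega> ` {0..<N}"

text \<open>p-constellation on N labelled edges: faces coloured, black faces of degree p,
  white faces of degree a multiple of p, connected, planar (Euler characteristic 2).\<close>

definition is_constellation :: "nat \<Rightarrow> nat \<Rightarrow> (nat \<Rightarrow> nat) \<Rightarrow> (nat \<Rightarrow> nat) \<Rightarrow> bool" where
  "is_constellation p N \<beta> \<omega> \<longleftrightarrow>
     \<beta> permutes {0..<N} \<and> \<omega> permutes {0..<N} \<and>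
     (\<forall>e<N. card (porbit \<beta> e) = p) \<and>
     (\<forall>e<N. p dvd card (porbit \<omega> e)) \<and>
     (\<forall>e<N. \<forall>e'<N. (\<lambda>a b. b = \<beta> a \<or> b = \<omega> a)\<^sup>*\<^sup>* e e') \<and>
     card (vertices N \<beta> \<omega>) + card (black_faces N \<beta>) + card (white_faces N \<omega>) = N + 2"

text \<open>Oriented step relation between vertices and the type of a vertex (distance to the pointed vertex v0).\<close>

definition vstep :: "nat \<Rightarrow> (nat \<Rightarrow> nat) \<Rightarrow> (nat \<Rightarrow> nat) \<Rightarrow> nat set \<Rightarrow> nat set \<Rightarrow> bool" where
  "vstep N \<beta> \<omega> u w \<longleftrightarrow> (\<exists>e<N. tailv \<beta> \<omega> e = u \<and> headv \<beta> \<omega> e = w)"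

definition vtype :: "nat \<Rightarrow> (nat \<Rightarrow> nat) \<Rightarrow> (nat \<Rightarrow> nat) \<Rightarrow> nat set \<Rightarrow> nat set \<Rightarrow> nat" where
  "vtype N \<beta> \<omega> v0 u = (LEAST k. (vstep N \<beta> \<omega> ^^ k) u v0)"

text \<open>Labelled pointed rooted p-constellations (\<beta>, \<omega>, root edge, pointed vertex) with N edges
  whose root edge has type j -> j-1 for some j \<le> i.\<close>

type_synonym pr_const = "(nat \<Rightarrow> nat) \<times> (nat \<Rightarrow> nat) \<times> nat \<times> nat set"

definition PR :: "nat \<Rightarrow> nat \<Rightarrow> nat \<Rightarrow> pr_const set" where
  "PR p i N = {(\<beta>, \<omega>, r, v0). is_constellation p N \<beta> \<omega> \<and> r < N \<and> v0 \<in> vertices N \<beta> \<omega> \<and>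
      (\<exists>j. j \<le> i \<and> vtype N \<beta> \<omega> v0 (tailv \<beta> \<omega> r) = j \<and>
             vtype N \<beta> \<omega> v0 (headv \<beta> \<omega> r) + 1 = j)}"

text \<open>Isomorphism = relabelling of the edges (orientation-preserving homeomorphism of the sphere),
  preserving root edge and pointed vertex.\<close>

definition pr_iso :: "nat \<Rightarrow> pr_const \<Rightarrow> pr_const \<Rightarrow> bool" where
  "pr_iso N s s' \<longleftrightarrow> (case s of (\<beta>, \<omega>, r, v0) \<Rightarrow> case s' of (\<beta>', \<omega>', r', v0') \<Rightarrow>
     (\<exists>\<pi>. \<pi> permutes {0..<N} \<and> \<beta>' = \<pi> \<circ> \<beta> \<circ> inv_into UNIV \<pi> \<and> \<omega>' = \<pi> \<circ> \<omega> \<circ> inv_into UNIV \<pi> \<and>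
          r' = \<pi> r \<and> v0' = \<pi> ` v0))"

definition PR_classes :: "nat \<Rightarrow> nat \<Rightarrow> nat \<Rightarrow> pr_const set set" where
  "PR_classes p i N = PR p i N // {(s, s'). s \<in> PR p i N \<and> s' \<in> PR p i N \<and> pr_iso N s s'}"

text \<open>Weight monomial: product of x_k over white faces of degree kp.\<close>

definition wmono :: "nat \<Rightarrow> nat \<Rightarrow> pr_const \<Rightarrow> nat multiset" where
  "wmono p N s = (case s of (\<beta>, \<omega>, r, v0) \<Rightarrow>
      image_mset (\<lambda>F. card F div p) (mset_set (white_faces N \<omega>)))"

text \<open>V_i = 1 + generating function of pointed rooted p-constellations with root edge of type
  j -> j-1 for some j \<le> i.  A constellation with n black faces has N = p n edges.\<close>

definition Vgf :: "nat \<Rightarrow> nat \<Rightarrow> gf" where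
  "Vgf p i = 1 + Abs_fps (\<lambda>n. \<Sum>c\<in>PR_classes p i (p * n).
                                Poly_Mapping.single (wmono p (p * n) (SOME s. s \<in> c)) 1)"

text \<open>A p-path is encoded by its list of steps (True = rise (1,p-1), False = fall (1,-1)),
  together with its starting height; it must stay at heights \<ge> 0.\<close>

fun ppath_ok :: "nat \<Rightarrow> nat \<Rightarrow> nat \<Rightarrow> bool list \<Rightarrow> bool" where
  "ppath_ok p h e [] \<longleftrightarrow> h = e"
| "ppath_ok p h e (True # s) \<longleftrightarrow> ppath_ok p (h + (p - 1)) e s"
| "ppath_ok p h e (False # s) \<longleftrightarrow> 1 \<le> h \<and> ppath_ok p (h - 1) e s"

fun ppath_wt :: "nat \<Rightarrow> (nat \<Rightarrow> 'a::comm_ring_1) \<Rightarrow> nat \<Rightarrow> bool list \<Rightarrow> 'a" where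
  "ppath_wt p V h [] = 1"
| "ppath_wt p V h (True # s) = ppath_wt p V (h + (p - 1)) s"
| "ppath_wt p V h (False # s) = V h * ppath_wt p V (h - 1) s"

text \<open>F_n^{(r)}: sum of weights of p-paths from (-r, r) to (np, 0).\<close>

definition Fpath :: "nat \<Rightarrow> (nat \<Rightarrow> 'a::comm_ring_1) \<Rightarrow> nat \<Rightarrow> nat \<Rightarrow> 'a" where
  "Fpath p V n r = (\<Sum>s\<in>{s. length s = n * p + r \<and> ppath_ok p r 0 s}. ppath_wt p V r s)"

definition qk :: "nat \<Rightarrow> nat \<Rightarrow> nat" where "qk p k = k div (p - 1)"
definition rk :: "nat \<Rightarrow> nat \<Rightarrow> nat" where "rk p k = k - (p - 1) * qk p k"

definition Hdet :: "nat \<Rightarrow> (nat \<Rightarrow> 'a::comm_ring_1) \<Rightarrow> nat \<Rightarrow> int \<Rightarrow> 'a" where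
  "Hdet p V m n = (if n = -1 then 1 else
     det (mat (nat n + 1) (nat n + 1)
       (\<lambda>(i, j). Fpath p V (qk p (i + m) + j) (rk p (i + m)))))"

end

theory Submission
  imports Defs
begin

text \<open>
  The determinants have a closed product form, for any weights V. Write i + m = (p-1)q + r with
  r < p-1 and cut every p-path counted by the (i,j) entry F^{(r)}_{q+j} after its first i + q
  steps. At that moment it sits at a height kp + m, so the Hankel-type matrix factors as L Q,
  where L counts the initial pieces from height r to height kp + m and Q the final pieces from
  kp + m down to 0. Since i + q steps starting at height r reach at most height ip + m, and only
  by rising all the time, L is lower unitriangular; a piece of length jp + m descends at most
  jp + m, and only by falling all the time, so Q is upper triangular with diagonal entries
  V_1 \<cdots> V_{jp+m}. Hence H^{p,m}_n is the product over j \<le> n of V_1 \<cdots> V_{jp+m}, and the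
  claimed quotients telescope; for V = V_i the determinants are invertible power series.
\<close>

fun ppath_sum :: "nat \<Rightarrow> (nat \<Rightarrow> 'a::comm_ring_1) \<Rightarrow> nat \<Rightarrow> nat \<Rightarrow> nat \<Rightarrow> 'a" where
  "ppath_sum p V h 0 h' = (if h = h' then 1 else 0)"
| "ppath_sum p V h (Suc l) h' =
     ppath_sum p V (h + (p - 1)) l h' + (if 1 \<le> h then V h * ppath_sum p V (h - 1) l h' else 0)"

lemma finite_bool_lists_length: "finite {s :: bool list. length s = l \<and> P s}"
  using finite_lists_length_eq[of "UNIV :: bool set" l] by (rule finite_subset[rotated]) auto

lemma sum_ppath_wt_eq_ppath_sum:
  "(\<Sum>s\<in>{s. length s = l \<and> ppath_ok p h h' s}. ppath_wt p V h s) = ppath_sum p V h l h'"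
proof (induction l arbitrary: h)
  case 0
  have "{s :: bool list. length s = 0 \<and> ppath_ok p h h' s} = (if h = h' then {[]} else {})"
    by auto
  then show ?case by simp
next
  case (Suc l)
  let ?Rise = "{s. length s = l \<and> ppath_ok p (h + (p - 1)) h' s}"
  let ?Fall = "if 1 \<le> h then {s. length s = l \<and> ppath_ok p (h - 1) h' s} else {}"
  have split: "{s. length s = Suc l \<and> ppath_ok p h h' s} = Cons True ` ?Rise \<union> Cons False ` ?Fall"
  proof -
    have "s \<in> {s. length s = Suc l \<and> ppath_ok p h h' s} \<longleftrightarrow>
          s \<in> Cons True ` ?Rise \<union> Cons False ` ?Fall" for s
    proof (cases s)
      case (Cons b t)
      then show ?thesis by (cases b) auto
    qed auto
    then show ?thesis by blast
  qed
  have "finite ?Rise" "finite ?Fall"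
    by (simp_all add: finite_bool_lists_length)
  then have "(\<Sum>s\<in>{s. length s = Suc l \<and> ppath_ok p h h' s}. ppath_wt p V h s)
      = (\<Sum>s\<in>Cons True ` ?Rise. ppath_wt p V h s) + (\<Sum>s\<in>Cons False ` ?Fall. ppath_wt p V h s)"
    unfolding split by (intro sum.union_disjoint) auto
  also have "(\<Sum>s\<in>Cons True ` ?Rise. ppath_wt p V h s) = ppath_sum p V (h + (p - 1)) l h'"
    by (subst sum.reindex) (auto simp: Suc.IH)
  also have "(\<Sum>s\<in>Cons False ` ?Fall. ppath_wt p V h s)
      = (if 1 \<le> h then V h * ppath_sum p V (h - 1) l h' else 0)"
    by (subst sum.reindex) (auto simp: Suc.IH sum_distrib_left[symmetric])
  finally show ?case by simp
qed

lemma Fpath_eq_ppath_sum: "Fpath p V n r = ppath_sum p V r (n * p + r) 0"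
  unfolding Fpath_def by (rule sum_ppath_wt_eq_ppath_sum)

text \<open>The witness u is the number of rises.\<close>

lemma ppath_sum_nonzero_imp:
  assumes "ppath_sum p V h l h' \<noteq> 0" and "p \<ge> 1"
  shows "\<exists>u\<le>l. h' + l = h + u * p"
  using assms(1)
proof (induction l arbitrary: h)
  case 0
  then show ?case by (auto split: if_splits)
next
  case (Suc l)
  show ?case
  proof (cases "ppath_sum p V (h + (p - 1)) l h' = 0")
    case True
    with Suc.prems have "1 \<le> h" "ppath_sum p V (h - 1) l h' \<noteq> 0"
      by (auto split: if_splits)
    then obtain u where "u \<le> l" "h' + l = h - 1 + u * p"
      using Suc.IH by blast
    with \<open>1 \<le> h\<close> show ?thesis by (intro exI[of _ u]) auto
  next
    case False
    then obtain u where "u \<le> l" "h' + l = h + (p - 1) + u * p"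
      using Suc.IH by blast
    with \<open>p \<ge> 1\<close> show ?thesis by (intro exI[of _ "Suc u"]) auto
  qed
qed

lemma ppath_sum_eq_0_above:
  assumes "p \<ge> 1" and "h' > h + l * (p - 1)"
  shows "ppath_sum p V h l h' = 0"
proof (rule ccontr)
  assume "ppath_sum p V h l h' \<noteq> 0"
  then obtain u where "u \<le> l" "h' + l = h + u * p"
    using ppath_sum_nonzero_imp assms(1) by blast
  moreover from \<open>u \<le> l\<close> have "u * p \<le> l * p" by simp
  ultimately show False
    using assms by (cases p) (auto simp: algebra_simps)
qed

lemma ppath_sum_eq_0_below:
  assumes "p \<ge> 1" and "h > h' + l"
  shows "ppath_sum p V h l h' = 0"
  using ppath_sum_nonzero_imp[OF _ assms(1)] assms(2) by fastforce

lemma ppath_sum_rises: "p \<ge> 1 \<Longrightarrow> ppath_sum p V h l (h + l * (p - 1)) = 1"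
proof (induction l arbitrary: h)
  case 0
  then show ?case by simp
next
  case (Suc l)
  have "h + Suc l * (p - 1) = (h + (p - 1)) + l * (p - 1)"
    by simp
  then have "ppath_sum p V (h + (p - 1)) l (h + Suc l * (p - 1)) = 1"
    using Suc.IH[of "h + (p - 1)"] Suc.prems by metis
  moreover have "ppath_sum p V (h - 1) l (h + Suc l * (p - 1)) = 0" if "1 \<le> h"
    using Suc.prems that by (intro ppath_sum_eq_0_above) auto
  ultimately show ?case by simp
qed

lemma ppath_sum_falls: "p \<ge> 1 \<Longrightarrow> ppath_sum p V h h 0 = (\<Prod>i\<in>{1..h}. V i)"
proof (induction h)
  case 0
  then show ?case by simp
next
  case (Suc h)
  have "ppath_sum p V (Suc h + (p - 1)) h 0 = 0"
    using Suc.prems by (intro ppath_sum_eq_0_below) auto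
  with Suc show ?case by (simp add: prod.nat_ivl_Suc' mult.commute)
qed

text \<open>Cutting every path after l1 steps; no height above h + l1 (p - 1) is reachable by then.\<close>

lemma ppath_sum_add:
  assumes "finite S" and "{..h + l1 * (p - 1)} \<subseteq> S"
  shows "ppath_sum p V h (l1 + l2) h'' = (\<Sum>h'\<in>S. ppath_sum p V h l1 h' * ppath_sum p V h' l2 h'')"
  using assms(2)
proof (induction l1 arbitrary: h)
  case 0
  then have "h \<in> S" by auto
  have "(\<Sum>h'\<in>S. ppath_sum p V h 0 h' * ppath_sum p V h' l2 h'')
      = (\<Sum>h'\<in>S. if h = h' then ppath_sum p V h' l2 h'' else 0)"
    by (rule sum.cong) auto
  also have "\<dots> = ppath_sum p V h l2 h''"
    using \<open>h \<in> S\<close> assms(1) by (simp add: sum.delta)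
  finally show ?case by simp
next
  case (Suc l1)
  have "h + (p - 1) + l1 * (p - 1) = h + Suc l1 * (p - 1)"
    by simp
  then have rise: "{..h + (p - 1) + l1 * (p - 1)} \<subseteq> S"
    using Suc.prems by metis
  have fall: "{..h - 1 + l1 * (p - 1)} \<subseteq> S"
    using Suc.prems by auto
  have "ppath_sum p V h (Suc l1 + l2) h''
      = (\<Sum>h'\<in>S. ppath_sum p V (h + (p - 1)) l1 h' * ppath_sum p V h' l2 h'') +
        (if 1 \<le> h then V h * (\<Sum>h'\<in>S. ppath_sum p V (h - 1) l1 h' * ppath_sum p V h' l2 h'') else 0)"
    using Suc.IH[OF rise] Suc.IH[OF fall] by simp
  also have "\<dots> = (\<Sum>h'\<in>S. ppath_sum p V h (Suc l1) h' * ppath_sum p V h' l2 h'')"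
    by (simp add: algebra_simps sum.distrib sum_distrib_left)
  finally show ?case .
qed

lemma ppath_sum_add_through_levels:
  fixes g :: "nat \<Rightarrow> nat"
  assumes "inj_on g {..<N}"
    and through: "\<And>h'. ppath_sum p V h l1 h' * ppath_sum p V h' l2 h'' \<noteq> 0 \<Longrightarrow> h' \<in> g ` {..<N}"
  shows "ppath_sum p V h (l1 + l2) h''
       = (\<Sum>k<N. ppath_sum p V h l1 (g k) * ppath_sum p V (g k) l2 h'')"
proof -
  let ?f = "\<lambda>h'. ppath_sum p V h l1 h' * ppath_sum p V h' l2 h''"
  let ?S = "{..h + l1 * (p - 1)} \<union> g ` {..<N}"
  have "ppath_sum p V h (l1 + l2) h'' = (\<Sum>h'\<in>?S. ?f h')"
    by (rule ppath_sum_add) auto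
  also have "\<dots> = (\<Sum>h'\<in>g ` {..<N}. ?f h')"
  proof (rule sum.mono_neutral_right)
    show "\<forall>h'\<in>?S - g ` {..<N}. ?f h' = 0"
      using through by blast
  qed auto
  also have "\<dots> = (\<Sum>k<N. ?f (g k))"
    using assms(1) by (simp add: sum.reindex)
  finally show ?thesis .
qed

lemma qk_rk_decomp: "(p - 1) * qk p a + rk p a = a"
  unfolding rk_def qk_def by (simp add: mult.commute)

text \<open>
  Row i of the determinant is cut after i + qk p (i + m) steps, the row index of Q being the
  level k of the cutting height kp + m.
\<close>

definition rise_part_mat :: "nat \<Rightarrow> (nat \<Rightarrow> 'a::comm_ring_1) \<Rightarrow> nat \<Rightarrow> nat \<Rightarrow> 'a mat" where
  "rise_part_mat p V m N =
     mat N N (\<lambda>(i, k). ppath_sum p V (rk p (i + m)) (i + qk p (i + m)) (k * p + m))"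

definition fall_part_mat :: "nat \<Rightarrow> (nat \<Rightarrow> 'a::comm_ring_1) \<Rightarrow> nat \<Rightarrow> nat \<Rightarrow> 'a mat" where
  "fall_part_mat p V m N = mat N N (\<lambda>(k, j). ppath_sum p V (k * p + m) (j * p + m) 0)"

definition staircase_prod :: "nat \<Rightarrow> (nat \<Rightarrow> 'a::comm_ring_1) \<Rightarrow> nat \<Rightarrow> nat \<Rightarrow> 'a" where
  "staircase_prod p V m N = (\<Prod>j<N. \<Prod>h\<in>{1..j * p + m}. V h)"

lemma rise_part_top_height:
  assumes "p \<ge> 2"
  shows "rk p (i + m) + (i + qk p (i + m)) * (p - 1) = i * p + m"
proof -
  have "i * (p - 1) + i = i * p"
    using assms by (cases p) (auto simp: algebra_simps)
  with qk_rk_decomp[of p "i + m"] show ?thesis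
    by (simp add: algebra_simps)
qed

lemma Fpath_mat_factor:
  fixes V :: "nat \<Rightarrow> 'a::comm_ring_1"
  assumes "p \<ge> 2" and "m \<le> p - 1"
  shows "mat N N (\<lambda>(i, j). Fpath p V (qk p (i + m) + j) (rk p (i + m)))
       = rise_part_mat p V m N * fall_part_mat p V m N"
proof (rule eq_matI)
  fix i j
  assume "i < dim_row (rise_part_mat p V m N * fall_part_mat p V m N)"
    and "j < dim_col (rise_part_mat p V m N * fall_part_mat p V m N)"
  then have ij: "i < N" "j < N"
    by (auto simp: rise_part_mat_def fall_part_mat_def)
  define q r where "q = qk p (i + m)" and "r = rk p (i + m)"
  have decomp: "(p - 1) * q + r = i + m"
    unfolding q_def r_def by (rule qk_rk_decomp)
  have p_pos: "p > 0" using assms(1) by simp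
  have "q * p = (p - 1) * q + q"
    using p_pos by (cases p) (auto simp: algebra_simps)
  then have len: "(q + j) * p + r = (i + q) + (j * p + m)"
    using decomp by (simp add: algebra_simps)
  have through: "h' \<in> (\<lambda>k. k * p + m) ` {..<N}"
    if "ppath_sum p V r (i + q) h' * ppath_sum p V h' (j * p + m) 0 \<noteq> 0" for h'
  proof -
    from that have nz1: "ppath_sum p V r (i + q) h' \<noteq> 0"
      and nz2: "ppath_sum p V h' (j * p + m) 0 \<noteq> 0" by auto
    obtain u where "h' + (i + q) = r + u * p"
      using ppath_sum_nonzero_imp[OF nz1] p_pos by auto
    with decomp \<open>q * p = (p - 1) * q + q\<close> have "h' + q * p = m + u * p" by linarith
    then have "(h' + q * p) mod p = (m + u * p) mod p" by simp
    then have "h' mod p = m"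
      using assms(2) p_pos by simp
    then have h': "h' = h' div p * p + m"
      by (metis div_mult_mod_eq)
    obtain u' where "0 + (j * p + m) = h' + u' * p"
      using ppath_sum_nonzero_imp[OF nz2] p_pos by auto
    with h' have "h' div p * p \<le> j * p" by linarith
    with p_pos ij(2) have "h' div p < N" by simp
    with h' show ?thesis by blast
  qed
  have "inj_on (\<lambda>k. k * p + m) {..<N}"
    using p_pos by (auto simp: inj_on_def)
  then have "ppath_sum p V r ((q + j) * p + r) 0
      = (\<Sum>k<N. ppath_sum p V r (i + q) (k * p + m) * ppath_sum p V (k * p + m) (j * p + m) 0)"
    unfolding len using through by (rule ppath_sum_add_through_levels)
  with ij show "mat N N (\<lambda>(i, j). Fpath p V (qk p (i + m) + j) (rk p (i + m))) $$ (i, j)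
      = (rise_part_mat p V m N * fall_part_mat p V m N) $$ (i, j)"
    by (simp add: Fpath_eq_ppath_sum rise_part_mat_def fall_part_mat_def q_def r_def
        scalar_prod_def atLeast0LessThan)
qed (auto simp: rise_part_mat_def fall_part_mat_def)

lemma det_rise_part_mat:
  assumes "p \<ge> 2"
  shows "det (rise_part_mat p V m N) = 1"
proof -
  have carrier: "rise_part_mat p V m N \<in> carrier_mat N N"
    by (simp add: rise_part_mat_def)
  have "det (rise_part_mat p V m N) = prod_list (diag_mat (rise_part_mat p V m N))"
  proof (rule det_lower_triangular[OF _ carrier])
    fix i k
    assume "i < k" "k < N"
    have "rk p (i + m) + (i + qk p (i + m)) * (p - 1) = i * p + m"
      using assms by (rule rise_part_top_height)
    also have "\<dots> < k * p + m"
      using \<open>i < k\<close> assms by simp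
    finally have "ppath_sum p V (rk p (i + m)) (i + qk p (i + m)) (k * p + m) = 0"
      using assms by (intro ppath_sum_eq_0_above) simp_all
    with \<open>i < k\<close> \<open>k < N\<close> show "rise_part_mat p V m N $$ (i, k) = 0"
      by (simp add: rise_part_mat_def)
  qed
  also have "\<dots> = 1"
  proof -
    have "ppath_sum p V (rk p (i + m)) (i + qk p (i + m)) (i * p + m) = 1" for i
      using ppath_sum_rises[of p V "rk p (i + m)" "i + qk p (i + m)"]
        rise_part_top_height[OF assms, of i m] assms by simp
    then show ?thesis
      by (simp add: prod_list_diag_prod rise_part_mat_def)
  qed
  finally show ?thesis .
qed

lemma det_fall_part_mat:
  assumes "p \<ge> 1"
  shows "det (fall_part_mat p V m N) = staircase_prod p V m N"
proof -
  have carrier: "fall_part_mat p V m N \<in> carrier_mat N N"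
    by (simp add: fall_part_mat_def)
  have "upper_triangular (fall_part_mat p V m N)"
  proof
    fix k j
    assume "j < k" "k < dim_row (fall_part_mat p V m N)"
    with assms have "k * p + m > 0 + (j * p + m)" by simp
    with \<open>j < k\<close> \<open>k < dim_row (fall_part_mat p V m N)\<close> assms
    show "fall_part_mat p V m N $$ (k, j) = 0"
      by (simp add: fall_part_mat_def ppath_sum_eq_0_below)
  qed
  then have "det (fall_part_mat p V m N) = prod_list (diag_mat (fall_part_mat p V m N))"
    using carrier by (rule det_upper_triangular)
  also have "\<dots> = staircase_prod p V m N"
    using assms by (simp add: prod_list_diag_prod fall_part_mat_def staircase_prod_def
        ppath_sum_falls atLeast0LessThan)
  finally show ?thesis .
qed

lemma Hdet_eq_staircase_prod:
  fixes V :: "nat \<Rightarrow> 'a::comm_ring_1"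
  assumes "p \<ge> 2" and "m \<le> p - 1"
  shows "Hdet p V m (int N - 1) = staircase_prod p V m N"
proof (cases N)
  case 0
  then show ?thesis by (simp add: Hdet_def staircase_prod_def)
next
  case (Suc n)
  have "Hdet p V m (int N - 1)
      = det (mat N N (\<lambda>(i, j). Fpath p V (qk p (i + m) + j) (rk p (i + m))))"
    by (simp add: Hdet_def Suc)
  also have "\<dots> = det (rise_part_mat p V m N) * det (fall_part_mat p V m N)"
    unfolding Fpath_mat_factor[OF assms]
    by (rule det_mult[of _ N]) (simp_all add: rise_part_mat_def fall_part_mat_def)
  also have "\<dots> = staircase_prod p V m N"
    using assms by (simp add: det_rise_part_mat det_fall_part_mat)
  finally show ?thesis .
qed

lemma staircase_prod_Suc:
  "staircase_prod p V m (Suc N) = staircase_prod p V m N * (\<Prod>h\<in>{1..N * p + m}. V h)"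
  by (simp add: staircase_prod_def)

lemma staircase_prod_telescope:
  "V (N * p + Suc m) * (staircase_prod p V (Suc m) N * staircase_prod p V m (Suc N))
     = staircase_prod p V (Suc m) (Suc N) * staircase_prod p V m N"
  by (simp add: staircase_prod_Suc prod.nat_ivl_Suc' algebra_simps)

lemma staircase_prod_telescope_0:
  assumes "p \<ge> 1" and "N \<ge> 1"
  shows "V (N * p) * (staircase_prod p V 0 N * staircase_prod p V (p - 1) N)
     = staircase_prod p V 0 (Suc N) * staircase_prod p V (p - 1) (N - 1)"
proof -
  obtain N' where N: "N = Suc N'"
    using assms(2) by (cases N) auto
  let ?P = "\<Prod>h\<in>{1..N' * p + (p - 1)}. V h"
  have "N * p = Suc (N' * p + (p - 1))"
    using assms(1) N by (cases p) auto
  then have "(\<Prod>h\<in>{1..N * p}. V h) = ?P * V (N * p)"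
    by (simp only: prod.nat_ivl_Suc') (simp add: mult.commute)
  then have "staircase_prod p V 0 (Suc N) = staircase_prod p V 0 N * ?P * V (N * p)"
    unfolding staircase_prod_Suc[of p V 0 N] add_0_right by (simp add: mult.assoc)
  moreover have "staircase_prod p V (p - 1) N = staircase_prod p V (p - 1) (N - 1) * ?P"
    unfolding N by (simp add: staircase_prod_Suc)
  ultimately show ?thesis
    by (simp add: algebra_simps)
qed

lemma fps_nth_prod_0:
  "fps_nth (\<Prod>x\<in>A. f x :: 'a::comm_ring_1 fps) 0 = (\<Prod>x\<in>A. fps_nth (f x) 0)"
  by (induction A rule: infinite_finite_induct) auto

lemma Vgf_nth_0: "fps_nth (Vgf p i) 0 = 1"
proof -
  have "PR p i 0 = {}"
    by (auto simp: PR_def is_constellation_def vertices_def black_faces_def white_faces_def)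
  then show ?thesis by (simp add: Vgf_def PR_classes_def)
qed

lemma staircase_prod_Vgf_mult_nonzero:
  "staircase_prod p (Vgf p) m N * staircase_prod p (Vgf p) m' N' \<noteq> 0"
proof
  assume "staircase_prod p (Vgf p) m N * staircase_prod p (Vgf p) m' N' = 0"
  then have "fps_nth (staircase_prod p (Vgf p) m N * staircase_prod p (Vgf p) m' N') 0 = 0"
    by simp
  then show False
    by (simp add: staircase_prod_def fps_nth_prod_0 Vgf_nth_0)
qed

theorem corollary1:
  fixes p m n :: nat
  assumes "p \<ge> 2" and "m \<le> p - 1"
  shows "(1 \<le> m \<longrightarrow>
            Hdet p (Vgf p) m (int n - 1) * Hdet p (Vgf p) (m - 1) (int n) \<noteq> 0 \<and>
            Vgf p (p * n + m) * (Hdet p (Vgf p) m (int n - 1) * Hdet p (Vgf p) (m - 1) (int n))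
              = Hdet p (Vgf p) m (int n) * Hdet p (Vgf p) (m - 1) (int n - 1))
       \<and> (m = 0 \<and> 1 \<le> n \<longrightarrow>
            Hdet p (Vgf p) 0 (int n - 1) * Hdet p (Vgf p) (p - 1) (int n - 1) \<noteq> 0 \<and>
            Vgf p (p * n) * (Hdet p (Vgf p) 0 (int n - 1) * Hdet p (Vgf p) (p - 1) (int n - 1))
              = Hdet p (Vgf p) 0 (int n) * Hdet p (Vgf p) (p - 1) (int n - 2))"
proof -
  let ?V = "Vgf p" and ?S = "staircase_prod p (Vgf p)"
  have H: "Hdet p ?V k (int N - 1) = ?S k N" if "k \<le> p - 1" for k N
    using Hdet_eq_staircase_prod[OF assms(1) that] .
  have H': "Hdet p ?V k (int N) = ?S k (Suc N)" if "k \<le> p - 1" for k N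
    using H[OF that, of "Suc N"] by simp
  show ?thesis
  proof (intro conjI impI)
    assume "1 \<le> m"
    then obtain m' where m: "m = Suc m'" by (cases m) auto
    then show "Hdet p ?V m (int n - 1) * Hdet p ?V (m - 1) (int n) \<noteq> 0"
      using assms(2) by (simp add: H H' staircase_prod_Vgf_mult_nonzero)
    show "?V (p * n + m) * (Hdet p ?V m (int n - 1) * Hdet p ?V (m - 1) (int n))
        = Hdet p ?V m (int n) * Hdet p ?V (m - 1) (int n - 1)"
      using assms(2) m staircase_prod_telescope[of ?V n p m'] by (simp add: H H' mult.commute)
  next
    assume "m = 0 \<and> 1 \<le> n"
    then have "1 \<le> n" by simp
    show "Hdet p ?V 0 (int n - 1) * Hdet p ?V (p - 1) (int n - 1) \<noteq> 0"
      by (simp add: H staircase_prod_Vgf_mult_nonzero)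
    from \<open>1 \<le> n\<close> have "int n - 2 = int (n - 1) - 1"
      by simp
    then have H2: "Hdet p ?V (p - 1) (int n - 2) = ?S (p - 1) (n - 1)"
      by (simp only: H order.refl)
    show "?V (p * n) * (Hdet p ?V 0 (int n - 1) * Hdet p ?V (p - 1) (int n - 1))
        = Hdet p ?V 0 (int n) * Hdet p ?V (p - 1) (int n - 2)"
      unfolding H[OF le0] H[OF order.refl] H'[OF le0] H2 mult.commute[of p n]
      using assms(1) by (intro staircase_prod_telescope_0 \<open>1 \<le> n\<close>) simp
  qed
qed

end
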